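(* Let $\Omega\subset\mathbb{R}^3$ be a domain with coordinates $\mathbf{X}$ and let $\mathbf{x}=\boldsymbol{\chi}(\mathbf{X})$ be a smooth, one-to-one, invertible map of $\Omega$ onto $\omega=\boldsymbol{\chi}(\Omega)$, with deformation gradient $F_{iI}=\partial x_i/\partial X_I$ and Jacobian $\Lambda=\det\mathbf{F}>0$. Let $\kappa_0>0$, let $\boldsymbol{\rho}_0$ be a symmetric positive definite second order tensor field on $\Omega$, let $\mathbf{Q}_0$ be a symmetric, invertible second order tensor field on $\Omega$ with $\partial Q_{0IJ}/\partial X_I=0$ for all $J$, and let $\mathbf{Q}$ be an arbitrary symmetric, invertible second order tensor field on $\omega$ with $\partial Q_{ij}/\partial x_i=0$ for all $j$. For a time-dependent displacement field $\mathbf{U}(\mathbf{X},t)$ in $\Omega$ define the kinetic and strain energy densities $$T_0=\dot{\mathbf{U}}^t\boldsymbol{\rho}_0\dot{\mathbf{U}},\qquad W_0=\kappa_0\big(Q_{0IJ}\,\partial U_J/\partial X_I\big)^2,$$ and for a displacement field $\mathbf{u}(\mathbf{x},t)$ in $\omega$ define $$T=\dot{\mathbf{u}}^t\boldsymbol{\rho}\dot{\mathbf{u}},\qquad W=\kappa\big(Q_{ij}\,\partial u_j/\partial x_i\big)^2,$$ where $$\kappa=\Lambda\kappa_0,\qquad \boldsymbol{\rho}=\Lambda\,\mathbf{Q}\mathbf{F}^{-t}\mathbf{Q}_0^{-1}\boldsymbol{\rho}_0\mathbf{Q}_0^{-1}\mathbf{F}^{-1}\mathbf{Q}.$$ Then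 these energy densities are equivalent: if $\mathbf{U}$ and $\mathbf{u}$ are related by $\mathbf{U}=\mathbf{G}^t\mathbf{u}$ with $\mathbf{G}^t=\Lambda\,\mathbf{Q}_0^{-1}\mathbf{F}^{-1}\mathbf{Q}$ (evaluated at corresponding points $\mathbf{x}=\boldsymbol{\chi}(\mathbf{X})$), then $T\,\mathrm{d}v=T_0\,\mathrm{d}V$ and $W\,\mathrm{d}v=W_0\,\mathrm{d}V$, i.e. $T=\Lambda^{-1}T_0$ and $W=\Lambda^{-1}W_0$.
   Context: Repeated indices are summed; upper-case indices refer to components in the undeformed coordinates $\mathbf{X}$ and lower-case indices to components in the deformed coordinates $\mathbf{x}$. $\mathbf{F}^{-t}$ denotes the transpose of $\mathbf{F}^{-1}$, and $\mathrm{d}v=\Lambda\,\mathrm{d}V$ relates volume elements. The tensors $\mathbf{Q}_0,\mathbf{Q}$ define pentamode elastic stiffnesses $\kappa_0\mathbf{Q}_0\otimes\mathbf{Q}_0$ and $\kappa\mathbf{Q}\otimes\mathbf{Q}$. *)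

theory Defs
  imports "HOL-Analysis.Analysis"
begin

definition pd :: "(real^3 \<Rightarrow> 'a::real_normed_vector) \<Rightarrow> 3 \<Rightarrow> real^3 \<Rightarrow> 'a" where
  "pd f I X = vector_derivative (\<lambda>s. f (X + s *\<^sub>R axis I 1)) (at 0)"

fun Ck :: "nat \<Rightarrow> (real^3) set \<Rightarrow> (real^3 \<Rightarrow> 'a::real_normed_vector) \<Rightarrow> bool" where
  "Ck 0 S f = continuous_on S f"
| "Ck (Suc k) S f = (continuous_on S f \<and>
      (\<forall>I. \<forall>X\<in>S. (\<lambda>s. f (X + s *\<^sub>R axis I 1)) differentiable (at 0)) \<and>
      (\<forall>I. Ck k S (pd f I)))"

definition smooth_on :: "(real^3) set \<Rightarrow> (real^3 \<Rightarrow> 'a::real_normed_vector) \<Rightarrow> bool" where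
  "smooth_on S f = (\<forall>k. Ck k S f)"

text \<open>Gradient: (grad f X) $ I $ J = dF_J / dX_I.  Deformation gradient: (defgrad chi X) $ i $ I = dx_i/dX_I.\<close>
definition grad :: "(real^3 \<Rightarrow> real^3) \<Rightarrow> real^3 \<Rightarrow> real^3^3" where
  "grad f X = (\<chi> I. pd f I X)"

definition defgrad :: "(real^3 \<Rightarrow> real^3) \<Rightarrow> real^3 \<Rightarrow> real^3^3" where
  "defgrad f X = transpose (grad f X)"

text \<open>Divergence on the first index: (div Q) $ J = sum_I dQ_{IJ}/dX_I.\<close>
definition divergence :: "(real^3 \<Rightarrow> real^3^3) \<Rightarrow> real^3 \<Rightarrow> real^3" where
  "divergence Q X = (\<Sum>I\<in>UNIV. pd Q I X $ I)"

definition sym_pos_def :: "real^3^3 \<Rightarrow> bool" where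
  "sym_pos_def A = (transpose A = A \<and> (\<forall>v. v \<noteq> 0 \<longrightarrow> v \<bullet> (A *v v) > 0))"

text \<open>Kinetic energy density v^t rho v and pentamode strain energy density k (Q_{IJ} D_{IJ})^2,
  where D_{IJ} = dU_J/dX_I.\<close>
definition kin_energy :: "real^3^3 \<Rightarrow> real^3 \<Rightarrow> real" where
  "kin_energy rho v = v \<bullet> (rho *v v)"

definition strain_energy :: "real \<Rightarrow> real^3^3 \<Rightarrow> real^3^3 \<Rightarrow> real" where
  "strain_energy k Q D = k * (\<Sum>I\<in>UNIV. \<Sum>J\<in>UNIV. Q $ I $ J * D $ I $ J)^2"

end

theory Submission
  imports Defs "HOL-Homology.Invariance_of_Domain"
begin

text \<open>
  Write \<open>adj F = \<Lambda> F\<^sup>-\<^sup>1\<close> for the adjugate of the deformation gradient. The choice of \<open>G\<^sup>t\<close> makes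
  \<open>Q\<^sub>0 U = adj F (Q u)\<close>, so, as \<open>Div Q\<^sub>0 = 0\<close>, the contraction \<open>Q\<^sub>0 : Grad U\<close> is the divergence of
  \<open>adj F (Q u)\<close>. The Piola identity \<open>Div adj F = 0\<close>, a consequence of the symmetry of the second
  derivatives of \<open>\<chi>\<close>, turns this into \<open>\<Lambda> div (Q u)\<close>, which equals \<open>\<Lambda> Q : grad u\<close> because
  \<open>div Q = 0\<close>. Squaring gives \<open>W\<^sub>0 = \<Lambda> W\<close>. The kinetic identity is algebraic:
  \<open>\<rho> = \<Lambda>\<^sup>-\<^sup>1 G \<rho>\<^sub>0 G\<^sup>t\<close> and \<open>\<partial>\<^sub>t U = G\<^sup>t \<partial>\<^sub>t u\<close>.
\<close>

lemma bounded_bilinear_matrix_matrix_mult: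
  "bounded_bilinear (\<lambda>(A::real^'n^'m) (B::real^'k^'n). A ** B)"
  unfolding bilinear_conv_bounded_bilinear[symmetric] bilinear_def
  by (auto intro!: linearI simp: vec_eq_iff matrix_matrix_mult_def sum_distrib_left algebra_simps sum.distrib)

lemma bounded_bilinear_matrix_vector_mult:
  "bounded_bilinear (\<lambda>(A::real^'n^'m) (x::real^'n). A *v x)"
  unfolding bilinear_conv_bounded_bilinear[symmetric] bilinear_def
  by (auto intro!: linearI simp: vec_eq_iff matrix_vector_mult_def sum_distrib_left algebra_simps sum.distrib)

lemma differentiable_matrix_matrix_mult [derivative_intros]:
  fixes f :: "'a::real_normed_vector \<Rightarrow> real^'n^'m" and g :: "'a \<Rightarrow> real^'k^'n"
  shows "f differentiable (at x within S) \<Longrightarrow> g differentiable (at x within S) \<Longrightarrow>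
    (\<lambda>x. f x ** g x) differentiable (at x within S)"
  unfolding differentiable_def
  by (blast intro: bounded_bilinear.FDERIV[OF bounded_bilinear_matrix_matrix_mult])

lemma differentiable_matrix_vector_mult [derivative_intros]:
  fixes f :: "'a::real_normed_vector \<Rightarrow> real^'n^'m" and g :: "'a \<Rightarrow> real^'n"
  shows "f differentiable (at x within S) \<Longrightarrow> g differentiable (at x within S) \<Longrightarrow>
    (\<lambda>x. f x *v g x) differentiable (at x within S)"
  unfolding differentiable_def
  by (blast intro: bounded_bilinear.FDERIV[OF bounded_bilinear_matrix_vector_mult])

lemma vector_derivative_matrix_vector_mult_left:
  fixes f :: "real \<Rightarrow> real^'n"
  assumes "f differentiable (at t)"
  shows "vector_derivative (\<lambda>s. A *v f s) (at t) = A *v vector_derivative f (at t)"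
  using assms
  by (intro vector_derivative_at bounded_linear.has_vector_derivative[OF matrix_vector_mul_bounded_linear])
     (simp add: vector_derivative_works)

lemma has_vector_derivative_vec_nth:
  "(f has_vector_derivative f') F \<Longrightarrow> ((\<lambda>s. f s $ i) has_vector_derivative f' $ i) F"
  by (rule bounded_linear.has_vector_derivative[OF bounded_linear_vec_nth])

lemma has_vector_derivative_componentwise:
  fixes f :: "real \<Rightarrow> 'a::euclidean_space^'n"
  assumes "\<And>i. ((\<lambda>s. f s $ i) has_vector_derivative f' $ i) F"
  shows "(f has_vector_derivative f') F"
proof -
  have axis_sum: "(\<Sum>i\<in>UNIV. axis i (x $ i)) = x" for x :: "'a^'n"
    by (simp add: vec_eq_iff axis_def if_distrib cong: if_cong)
  have "bounded_linear (axis i :: 'a \<Rightarrow> 'a^'n)" for i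
    unfolding linear_conv_bounded_linear[symmetric]
    by (rule linearI) (simp_all add: axis_def vec_eq_iff)
  then have "((\<lambda>s. \<Sum>i\<in>UNIV. axis i (f s $ i)) has_vector_derivative (\<Sum>i\<in>UNIV. axis i (f' $ i))) F"
    by (intro has_vector_derivative_sum bounded_linear.has_vector_derivative[OF _ assms])
  then show ?thesis by (simp add: axis_sum)
qed

lemma has_vector_derivative_matrix_componentwise:
  fixes f :: "real \<Rightarrow> real^'n^'m"
  assumes "\<And>i j. ((\<lambda>s. f s $ i $ j) has_vector_derivative f' $ i $ j) F"
  shows "(f has_vector_derivative f') F"
  by (intro has_vector_derivative_componentwise) (simp add: assms)

lemma has_real_derivative_matrix_entry:
  "(f has_vector_derivative f') F \<Longrightarrow> ((\<lambda>s. f s $ i $ j) has_real_derivative f' $ i $ j) F"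
  unfolding has_real_derivative_iff_has_vector_derivative
  by (intro has_vector_derivative_vec_nth)

lemma scaleR_matrix_matrix_mult_left: "(c *\<^sub>R A) ** B = c *\<^sub>R (A ** B)"
  and scaleR_matrix_matrix_mult_right: "A ** (c *\<^sub>R B) = c *\<^sub>R (A ** B)"
  for A :: "real^'n^'m" and B :: "real^'k^'n"
  by (simp_all add: vec_eq_iff matrix_matrix_mult_def sum_distrib_left algebra_simps)

lemma matrix_inv_unique:
  fixes A B :: "real^'n^'n"
  assumes AB: "A ** B = mat 1" and BA: "B ** A = mat 1"
  shows "matrix_inv A = B"
proof -
  have "A ** matrix_inv A = mat 1 \<and> matrix_inv A ** A = mat 1"
    unfolding matrix_inv_def by (rule someI[of _ B]) (simp add: AB BA)
  then have "matrix_inv A = matrix_inv A ** (A ** B)" and "matrix_inv A ** A = mat 1"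
    by (simp_all add: AB)
  then show ?thesis by (simp add: matrix_mul_assoc)
qed

section \<open>The adjugate of a \<open>3 \<times> 3\<close> matrix\<close>

definition adjugate3 :: "real^3^3 \<Rightarrow> real^3^3" where
  "adjugate3 A = vector [
     vector [A$2$2*A$3$3 - A$2$3*A$3$2, A$1$3*A$3$2 - A$1$2*A$3$3, A$1$2*A$2$3 - A$1$3*A$2$2],
     vector [A$2$3*A$3$1 - A$2$1*A$3$3, A$1$1*A$3$3 - A$1$3*A$3$1, A$1$3*A$2$1 - A$1$1*A$2$3],
     vector [A$2$1*A$3$2 - A$2$2*A$3$1, A$1$2*A$3$1 - A$1$1*A$3$2, A$1$1*A$2$2 - A$1$2*A$2$1]]"

lemma matrix_mul_adjugate3: "A ** adjugate3 A = det A *\<^sub>R mat 1"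
  by (simp add: vec_eq_iff forall_3 matrix_matrix_mult_def sum_3 det_3 mat_def adjugate3_def algebra_simps)

lemma adjugate3_matrix_mul: "adjugate3 A ** A = det A *\<^sub>R mat 1"
  by (simp add: vec_eq_iff forall_3 matrix_matrix_mult_def sum_3 det_3 mat_def adjugate3_def algebra_simps)

lemma matrix_inv_adjugate3: "det A \<noteq> 0 \<Longrightarrow> matrix_inv A = inverse (det A) *\<^sub>R adjugate3 A"
  by (rule matrix_inv_unique)
     (simp_all add: scaleR_matrix_matrix_mult_left scaleR_matrix_matrix_mult_right
        adjugate3_matrix_mul matrix_mul_adjugate3)

lemma transpose_adjugate3: "transpose (adjugate3 A) = adjugate3 (transpose A)"
  by (simp add: vec_eq_iff forall_3 transpose_def adjugate3_def)

lemma transpose_matrix_inv3: "transpose (matrix_inv A) = matrix_inv (transpose A)"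
  if "det A \<noteq> 0" for A :: "real^3^3"
  using that by (simp add: matrix_inv_adjugate3 transpose_scalar transpose_adjugate3 det_transpose)

text \<open>\<open>adjugate3\<close> is quadratic, so its derivative is the polarization of \<open>adjugate3\<close>.\<close>
lemma has_vector_derivative_adjugate3:
  assumes f: "(f has_vector_derivative f') (at x within S)"
  shows "((\<lambda>s. adjugate3 (f s)) has_vector_derivative
           adjugate3 (f x + f') - adjugate3 (f x) - adjugate3 f') (at x within S)"
proof (rule has_vector_derivative_matrix_componentwise)
  note entries = has_real_derivative_matrix_entry[OF f]
  fix i j :: 3
  show "((\<lambda>s. adjugate3 (f s) $ i $ j) has_vector_derivative
          (adjugate3 (f x + f') - adjugate3 (f x) - adjugate3 f') $ i $ j) (at x within S)"
    unfolding has_real_derivative_iff_has_vector_derivative[symmetric]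
    using exhaust_3[of i] exhaust_3[of j]
    by (auto simp: adjugate3_def algebra_simps intro!: derivative_eq_intros entries)
qed

lemma differentiable_adjugate3:
  fixes f :: "real \<Rightarrow> real^3^3"
  assumes "f differentiable (at x within S)"
  shows "(\<lambda>s. adjugate3 (f s)) differentiable (at x within S)"
  using assms has_vector_derivative_adjugate3 differentiableI_vector vector_derivative_works by blast

lemma differentiable_det3:
  fixes f :: "real \<Rightarrow> real^3^3"
  assumes "f differentiable (at x within S)"
  shows "(\<lambda>s. det (f s)) differentiable (at x within S)"
proof -
  have "((\<lambda>s. f s $ i $ j) has_real_derivative vector_derivative f (at x within S) $ i $ j) (at x within S)"
    for i j
    using assms by (intro has_real_derivative_matrix_entry) (simp add: vector_derivative_works)
  then have "(\<lambda>s. f s $ i $ j) differentiable (at x within S)" for i j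
    using real_differentiable_def differentiable_def has_field_derivative_imp_has_derivative by blast
  then show ?thesis unfolding det_3 by (intro derivative_intros)
qed

lemma differentiable_matrix_inv3:
  fixes f :: "real \<Rightarrow> real^3^3"
  assumes f: "f differentiable (at x)" and det: "det (f x) \<noteq> 0"
  shows "(\<lambda>s. matrix_inv (f s)) differentiable (at x)"
proof -
  have "(\<lambda>s. inverse (det (f s)) *\<^sub>R adjugate3 (f s)) differentiable (at x)"
    using f det by (intro derivative_intros differentiable_det3 differentiable_adjugate3)
  then obtain D where D: "((\<lambda>s. inverse (det (f s)) *\<^sub>R adjugate3 (f s)) has_vector_derivative D) (at x)"
    using vector_derivative_works by blast
  have "continuous (at x) (\<lambda>s. det (f s))"
    using differentiable_det3[OF f] differentiable_imp_continuous_within by blast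
  from continuous_at_avoid[OF this det]
  have "\<forall>\<^sub>F s in nhds x. s \<in> UNIV \<longrightarrow> matrix_inv (f s) = inverse (det (f s)) *\<^sub>R adjugate3 (f s)"
    by (auto simp: eventually_nhds_metric dist_commute matrix_inv_adjugate3)
  from has_vector_derivative_cong_ev[OF this] D det
  have "((\<lambda>s. matrix_inv (f s)) has_vector_derivative D) (at x)"
    by (simp add: matrix_inv_adjugate3)
  then show ?thesis by (rule differentiableI_vector)
qed

definition partially_differentiable :: "(real^3 \<Rightarrow> 'a::real_normed_vector) \<Rightarrow> real^3 \<Rightarrow> bool" where
  "partially_differentiable f X \<longleftrightarrow> (\<forall>I. (\<lambda>s. f (X + s *\<^sub>R axis I 1)) differentiable (at 0))"

definition vector_divergence :: "(real^3 \<Rightarrow> real^3) \<Rightarrow> real^3 \<Rightarrow> real" where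
  "vector_divergence w X = (\<Sum>I\<in>UNIV. pd w I X $ I)"

definition double_dot :: "real^'n^'m \<Rightarrow> real^'n^'m \<Rightarrow> real" where
  "double_dot A B = (\<Sum>I\<in>UNIV. \<Sum>J\<in>UNIV. A $ I $ J * B $ I $ J)"

lemma defgrad_component: "defgrad f X $ i $ J = pd f J X $ i"
  by (simp add: defgrad_def grad_def transpose_def)

lemma has_vector_derivative_pd:
  "(\<lambda>s. f (X + s *\<^sub>R axis I 1)) differentiable (at 0) \<Longrightarrow>
    ((\<lambda>s. f (X + s *\<^sub>R axis I 1)) has_vector_derivative pd f I X) (at 0)"
  unfolding pd_def by (simp add: vector_derivative_works)

lemma pd_eqI:
  "((\<lambda>s. f (X + s *\<^sub>R axis I 1)) has_vector_derivative D) (at 0) \<Longrightarrow> pd f I X = D"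
  unfolding pd_def by (rule vector_derivative_at)

lemma has_vector_derivative_along_line:
  assumes "(f has_derivative f') (at X)"
  shows "((\<lambda>s. f (X + s *\<^sub>R v)) has_vector_derivative f' v) (at 0)"
proof -
  have "((\<lambda>s. X + s *\<^sub>R v) has_vector_derivative v) (at 0)"
    by (auto intro!: derivative_eq_intros)
  from vector_derivative_diff_chain_within[OF this, of f f'] assms
  show ?thesis by (simp add: o_def has_derivative_at_withinI)
qed

lemma differentiable_imp_partially_differentiable:
  "f differentiable (at X) \<Longrightarrow> partially_differentiable f X"
  unfolding partially_differentiable_def
  by (metis differentiable_def has_vector_derivative_along_line differentiableI_vector)

lemma has_vector_derivative_compose_along_line:
  assumes v: "(v has_derivative v') (at (chi X))"
    and chi: "(\<lambda>s. chi (X + s *\<^sub>R axis I 1)) differentiable (at 0)"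
  shows "((\<lambda>s. v (chi (X + s *\<^sub>R axis I 1))) has_vector_derivative
           (\<Sum>m\<in>UNIV. defgrad chi X $ m $ I *\<^sub>R pd v m (chi X))) (at 0)"
proof -
  have pd_v: "pd v m (chi X) = v' (axis m 1)" for m
    by (rule pd_eqI[OF has_vector_derivative_along_line[OF v]])
  have "v' (pd chi I X) = v' (\<Sum>m\<in>UNIV. pd chi I X $ m *\<^sub>R axis m 1)"
    using basis_expansion[of "pd chi I X"] by (simp add: scalar_mult_eq_scaleR)
  also have "\<dots> = (\<Sum>m\<in>UNIV. defgrad chi X $ m $ I *\<^sub>R pd v m (chi X))"
    using has_derivative_linear[OF v] by (simp add: linear_sum linear_cmul pd_v defgrad_component)
  finally have v'_pd: "v' (pd chi I X) = (\<Sum>m\<in>UNIV. defgrad chi X $ m $ I *\<^sub>R pd v m (chi X))" .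
  from vector_derivative_diff_chain_within[OF has_vector_derivative_pd[OF chi], of v v'] v
  show ?thesis by (simp add: o_def has_derivative_at_withinI v'_pd)
qed

lemma eventually_along_line_in_open:
  fixes X :: "'a::real_normed_vector"
  assumes "open S" "X \<in> S"
  shows "\<forall>\<^sub>F s in nhds 0. X + s *\<^sub>R v \<in> S"
proof -
  have "open ((\<lambda>s::real. X + s *\<^sub>R v) -` S)"
    by (rule continuous_open_vimage[OF assms(1)]) (intro continuous_intros)
  then show ?thesis
    using eventually_nhds_in_open[of "(\<lambda>s::real. X + s *\<^sub>R v) -` S" 0] assms(2) by simp
qed

lemma has_vector_derivative_along_line_cong_open:
  fixes X :: "'a::real_normed_vector"
  assumes "open S" "X \<in> S" "\<And>Y. Y \<in> S \<Longrightarrow> f Y = g Y"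
  shows "((\<lambda>s. f (X + s *\<^sub>R v)) has_vector_derivative D) (at 0) \<longleftrightarrow>
         ((\<lambda>s. g (X + s *\<^sub>R v)) has_vector_derivative D) (at 0)"
proof (rule has_vector_derivative_cong_ev)
  show "\<forall>\<^sub>F s in nhds 0. s \<in> UNIV \<longrightarrow> f (X + s *\<^sub>R v) = g (X + s *\<^sub>R v)"
    using eventually_along_line_in_open[OF assms(1,2), of v] by (auto elim!: eventually_mono assms(3))
qed (simp add: assms)

lemma pd_cong_open:
  assumes "open S" "X \<in> S" "\<And>Y. Y \<in> S \<Longrightarrow> f Y = g Y"
  shows "pd f I X = pd g I X"
  unfolding pd_def vector_derivative_def
  by (intro arg_cong[where f=Eps] ext has_vector_derivative_along_line_cong_open[OF assms])

lemma pd_matrix_vector_mult: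
  fixes A :: "real^3 \<Rightarrow> real^'n^'m" and w :: "real^3 \<Rightarrow> real^'n"
  assumes "partially_differentiable A X" "partially_differentiable w X"
  shows "pd (\<lambda>Y. A Y *v w Y) I X = A X *v pd w I X + pd A I X *v w X"
proof (rule pd_eqI)
  have "((\<lambda>s. A (X + s *\<^sub>R axis I 1)) has_vector_derivative pd A I X) (at 0)"
    and "((\<lambda>s. w (X + s *\<^sub>R axis I 1)) has_vector_derivative pd w I X) (at 0)"
    using assms by (simp_all add: partially_differentiable_def has_vector_derivative_pd)
  from bounded_bilinear.has_vector_derivative[OF bounded_bilinear_matrix_vector_mult this]
  show "((\<lambda>s. A (X + s *\<^sub>R axis I 1) *v w (X + s *\<^sub>R axis I 1)) has_vector_derivative
         A X *v pd w I X + pd A I X *v w X) (at 0)"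
    by simp
qed

lemma vector_divergence_matrix_vector_mult:
  fixes A :: "real^3 \<Rightarrow> real^3^3"
  assumes "partially_differentiable A X" "partially_differentiable w X"
  shows "vector_divergence (\<lambda>Y. A Y *v w Y) X = divergence A X \<bullet> w X + double_dot (A X) (grad w X)"
  unfolding vector_divergence_def pd_matrix_vector_mult[OF assms]
  by (simp add: divergence_def double_dot_def grad_def matrix_vector_mult_def inner_vec_def
      sum_3 algebra_simps)

lemma double_dot_grad_eq_vector_divergence:
  fixes A :: "real^3 \<Rightarrow> real^3^3"
  assumes "partially_differentiable A X" "partially_differentiable w X" "divergence A X = 0"
  shows "double_dot (A X) (grad w X) = vector_divergence (\<lambda>Y. A Y *v w Y) X"
  by (simp add: vector_divergence_matrix_vector_mult assms)

section \<open>Symmetry of mixed partial derivatives\<close>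

lemma has_real_derivative_along_line_shift:
  fixes Y :: "'a::real_normed_vector"
  assumes "\<forall>Y\<in>S. ((\<lambda>s. g (Y + s *\<^sub>R v)) has_real_derivative g' Y) (at 0)"
    and "Y + a *\<^sub>R v \<in> S"
  shows "((\<lambda>b. g (Y + b *\<^sub>R v)) has_real_derivative g' (Y + a *\<^sub>R v)) (at a)"
proof -
  have "(\<lambda>s. g (Y + (s + a) *\<^sub>R v)) = (\<lambda>s. g ((Y + a *\<^sub>R v) + s *\<^sub>R v))"
    by (simp add: algebra_simps)
  with assms have "((\<lambda>s. g (Y + (s + a) *\<^sub>R v)) has_real_derivative g' (Y + a *\<^sub>R v)) (at 0)"
    by simp
  then show ?thesis
    using DERIV_shift[of "\<lambda>b. g (Y + b *\<^sub>R v)" "g' (Y + a *\<^sub>R v)" 0 a] by simp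
qed

lemma mvt_along_line:
  fixes g g' :: "'a::real_normed_vector \<Rightarrow> real"
  assumes dg: "\<forall>Y\<in>S. ((\<lambda>s. g (Y + s *\<^sub>R v)) has_real_derivative g' Y) (at 0)"
    and h: "0 \<le> h" and seg: "\<And>b. 0 \<le> b \<Longrightarrow> b \<le> h \<Longrightarrow> Y + b *\<^sub>R v \<in> S"
  shows "\<exists>b\<in>{0..h}. g (Y + h *\<^sub>R v) - g Y = h * g' (Y + b *\<^sub>R v)"
proof -
  have "\<exists>b\<in>{0..h}. g (Y + h *\<^sub>R v) - g (Y + 0 *\<^sub>R v) = g' (Y + b *\<^sub>R v) * (h - 0)"
  proof (rule mvt_very_simple[OF h])
    fix b assume "0 \<le> b" "b \<le> h"
    with has_real_derivative_along_line_shift[OF dg seg]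
    show "((\<lambda>b. g (Y + b *\<^sub>R v)) has_derivative (*) (g' (Y + b *\<^sub>R v))) (at b within {0..h})"
      by (simp add: has_field_derivative_def has_derivative_at_withinI)
  qed
  then show ?thesis by (simp add: mult.commute)
qed

lemma mixed_difference_mvt:
  fixes g gu guv :: "'a::real_normed_vector \<Rightarrow> real"
  assumes du: "\<forall>Y\<in>S. ((\<lambda>s. g (Y + s *\<^sub>R u)) has_real_derivative gu Y) (at 0)"
    and duv: "\<forall>Y\<in>S. ((\<lambda>s. gu (Y + s *\<^sub>R v)) has_real_derivative guv Y) (at 0)"
    and h: "0 \<le> h"
    and box: "\<And>a b. 0 \<le> a \<Longrightarrow> a \<le> h \<Longrightarrow> 0 \<le> b \<Longrightarrow> b \<le> h \<Longrightarrow> X + a *\<^sub>R u + b *\<^sub>R v \<in> S"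
  shows "\<exists>a\<in>{0..h}. \<exists>b\<in>{0..h}. g (X + h *\<^sub>R u + h *\<^sub>R v) - g (X + h *\<^sub>R u) - g (X + h *\<^sub>R v) + g X
           = h * h * guv (X + a *\<^sub>R u + b *\<^sub>R v)"
proof -
  define \<phi> where "\<phi> Y = g (Y + h *\<^sub>R v) - g Y" for Y
  have "\<forall>Y\<in>{Y\<in>S. Y + h *\<^sub>R v \<in> S}.
          ((\<lambda>s. \<phi> (Y + s *\<^sub>R u)) has_real_derivative gu (Y + h *\<^sub>R v) - gu Y) (at 0)"
  proof
    fix Y assume Y: "Y \<in> {Y\<in>S. Y + h *\<^sub>R v \<in> S}"
    have "(\<lambda>s. \<phi> (Y + s *\<^sub>R u)) = (\<lambda>s. g ((Y + h *\<^sub>R v) + s *\<^sub>R u) - g (Y + s *\<^sub>R u))"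
      by (simp add: \<phi>_def algebra_simps)
    then show "((\<lambda>s. \<phi> (Y + s *\<^sub>R u)) has_real_derivative gu (Y + h *\<^sub>R v) - gu Y) (at 0)"
      using du Y by (auto intro!: DERIV_diff)
  qed
  from mvt_along_line[OF this h, of X] box[of _ 0] box[of _ h] h
  obtain a where a: "a \<in> {0..h}" "\<phi> (X + h *\<^sub>R u) - \<phi> X = h * (gu (X + a *\<^sub>R u + h *\<^sub>R v) - gu (X + a *\<^sub>R u))"
    by auto
  from mvt_along_line[OF duv h, of "X + a *\<^sub>R u"] box[of a] a
  obtain b where b: "b \<in> {0..h}" "gu (X + a *\<^sub>R u + h *\<^sub>R v) - gu (X + a *\<^sub>R u) = h * guv (X + a *\<^sub>R u + b *\<^sub>R v)"
    by auto
  have "g (X + h *\<^sub>R u + h *\<^sub>R v) - g (X + h *\<^sub>R u) - g (X + h *\<^sub>R v) + g X = \<phi> (X + h *\<^sub>R u) - \<phi> X"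
    by (simp add: \<phi>_def)
  also have "\<dots> = h * h * guv (X + a *\<^sub>R u + b *\<^sub>R v)"
    using a(2) b(2) by simp
  finally show ?thesis using a(1) b(1) by blast
qed

lemma mixed_difference_quotient_tendsto:
  fixes g gu guv :: "'a::real_normed_vector \<Rightarrow> real"
  assumes S: "open S" "X \<in> S"
    and du: "\<forall>Y\<in>S. ((\<lambda>s. g (Y + s *\<^sub>R u)) has_real_derivative gu Y) (at 0)"
    and duv: "\<forall>Y\<in>S. ((\<lambda>s. gu (Y + s *\<^sub>R v)) has_real_derivative guv Y) (at 0)"
    and cont: "continuous_on S guv"
  shows "((\<lambda>h. (g (X + h *\<^sub>R u + h *\<^sub>R v) - g (X + h *\<^sub>R u) - g (X + h *\<^sub>R v) + g X) / (h * h))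
           \<longlongrightarrow> guv X) (at_right 0)"
proof (rule tendstoI)
  fix e :: real assume "e > 0"
  have "isCont guv X" using cont S continuous_on_eq_continuous_at by blast
  then obtain d where d: "d > 0" "\<And>Y. dist Y X < d \<Longrightarrow> dist (guv Y) (guv X) < e"
    using \<open>e > 0\<close> unfolding continuous_at_eps_delta by blast
  obtain r where r: "r > 0" "ball X r \<subseteq> S" using S open_contains_ball by blast
  define N where "N = norm u + norm v + 1"
  have N: "N > 0" by (simp add: N_def add_nonneg_pos)
  show "\<forall>\<^sub>F h in at_right 0.
          dist ((g (X + h *\<^sub>R u + h *\<^sub>R v) - g (X + h *\<^sub>R u) - g (X + h *\<^sub>R v) + g X) / (h * h)) (guv X) < e"
    unfolding eventually_at_right_field
  proof (intro exI[of _ "min d r / N"] conjI allI impI)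
    show "0 < min d r / N" using d r N by simp
    fix h :: real assume h: "0 < h" "h < min d r / N"
    have near: "dist (X + a *\<^sub>R u + b *\<^sub>R v) X < min d r" if "a \<in> {0..h}" "b \<in> {0..h}" for a b
    proof -
      have "dist (X + a *\<^sub>R u + b *\<^sub>R v) X \<le> a * norm u + b * norm v"
        using norm_triangle_ineq[of "a *\<^sub>R u" "b *\<^sub>R v"] that by (simp add: dist_norm)
      also have "\<dots> \<le> h * N"
      proof -
        have "a * norm u \<le> h * norm u" "b * norm v \<le> h * norm v"
          using that by (auto intro: mult_right_mono)
        then show ?thesis using h by (simp add: N_def distrib_left)
      qed
      also have "\<dots> < min d r" using h N by (simp add: pos_less_divide_eq)
      finally show ?thesis .
    qed
    have box: "X + a *\<^sub>R u + b *\<^sub>R v \<in> S" if "0 \<le> a" "a \<le> h" "0 \<le> b" "b \<le> h" for a b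
      using near[of a b] that r by (auto simp: dist_commute)
    from mixed_difference_mvt[OF du duv less_imp_le[OF h(1)] box]
    obtain a b where ab: "a \<in> {0..h}" "b \<in> {0..h}"
      "g (X + h *\<^sub>R u + h *\<^sub>R v) - g (X + h *\<^sub>R u) - g (X + h *\<^sub>R v) + g X = h * h * guv (X + a *\<^sub>R u + b *\<^sub>R v)"
      by auto
    show "dist ((g (X + h *\<^sub>R u + h *\<^sub>R v) - g (X + h *\<^sub>R u) - g (X + h *\<^sub>R v) + g X) / (h * h)) (guv X) < e"
      using ab d(2)[of "X + a *\<^sub>R u + b *\<^sub>R v"] near[OF ab(1,2)] h by simp
  qed
qed

lemma mixed_directional_derivatives_commute:
  fixes g gu gv guv gvu :: "'a::real_normed_vector \<Rightarrow> real"
  assumes S: "open S" "X \<in> S"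
    and du: "\<forall>Y\<in>S. ((\<lambda>s. g (Y + s *\<^sub>R u)) has_real_derivative gu Y) (at 0)"
    and dv: "\<forall>Y\<in>S. ((\<lambda>s. g (Y + s *\<^sub>R v)) has_real_derivative gv Y) (at 0)"
    and duv: "\<forall>Y\<in>S. ((\<lambda>s. gu (Y + s *\<^sub>R v)) has_real_derivative guv Y) (at 0)"
    and dvu: "\<forall>Y\<in>S. ((\<lambda>s. gv (Y + s *\<^sub>R u)) has_real_derivative gvu Y) (at 0)"
    and "continuous_on S guv" "continuous_on S gvu"
  shows "guv X = gvu X"
proof (rule tendsto_unique[OF trivial_limit_at_right_real])
  show "((\<lambda>h. (g (X + h *\<^sub>R u + h *\<^sub>R v) - g (X + h *\<^sub>R u) - g (X + h *\<^sub>R v) + g X) / (h * h))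
          \<longlongrightarrow> guv X) (at_right 0)"
    by (rule mixed_difference_quotient_tendsto) fact+
  have "(\<lambda>h. (g (X + h *\<^sub>R v + h *\<^sub>R u) - g (X + h *\<^sub>R v) - g (X + h *\<^sub>R u) + g X) / (h * h))
      = (\<lambda>h. (g (X + h *\<^sub>R u + h *\<^sub>R v) - g (X + h *\<^sub>R u) - g (X + h *\<^sub>R v) + g X) / (h * h))"
    by (simp add: algebra_simps)
  with mixed_difference_quotient_tendsto[OF S dv dvu \<open>continuous_on S gvu\<close>]
  show "((\<lambda>h. (g (X + h *\<^sub>R u + h *\<^sub>R v) - g (X + h *\<^sub>R u) - g (X + h *\<^sub>R v) + g X) / (h * h))
          \<longlongrightarrow> gvu X) (at_right 0)"
    by simp
qed

lemma Ck2_partials: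
  assumes "Ck 2 S f"
  shows "Y \<in> S \<Longrightarrow> ((\<lambda>s. f (Y + s *\<^sub>R axis I 1)) has_vector_derivative pd f I Y) (at 0)"
    and "Y \<in> S \<Longrightarrow> ((\<lambda>s. pd f J (Y + s *\<^sub>R axis I 1)) has_vector_derivative pd (pd f J) I Y) (at 0)"
    and "continuous_on S (pd (pd f J) I)"
  using assms by (simp_all add: numeral_2_eq_2 has_vector_derivative_pd)

lemma pd_pd_commute:
  fixes f :: "real^3 \<Rightarrow> real^'n"
  assumes S: "open S" "X \<in> S" and f: "Ck 2 S f"
  shows "pd (pd f J) I X = pd (pd f I) J X"
proof -
  have d1: "\<forall>Y\<in>S. ((\<lambda>s. f (Y + s *\<^sub>R axis K 1) $ m) has_real_derivative pd f K Y $ m) (at 0)"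
    for K m
    using Ck2_partials(1)[OF f]
    by (simp add: has_real_derivative_iff_has_vector_derivative has_vector_derivative_vec_nth)
  have d2: "\<forall>Y\<in>S. ((\<lambda>s. pd f K (Y + s *\<^sub>R axis L 1) $ m) has_real_derivative pd (pd f K) L Y $ m) (at 0)"
    for K L m
    using Ck2_partials(2)[OF f]
    by (simp add: has_real_derivative_iff_has_vector_derivative has_vector_derivative_vec_nth)
  have c: "continuous_on S (\<lambda>Y. pd (pd f K) L Y $ m)" for K L m
    using Ck2_partials(3)[OF f] by (simp add: continuous_on_component)
  have "pd (pd f J) I X $ m = pd (pd f I) J X $ m" for m
    by (rule mixed_directional_derivatives_commute[OF S d1 d1 d2 d2 c c])
  then show ?thesis by (simp add: vec_eq_iff)
qed

section \<open>The Piola identity\<close>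

lemma has_vector_derivative_defgrad:
  assumes "Ck 2 S chi" "X \<in> S"
  shows "((\<lambda>s. defgrad chi (X + s *\<^sub>R axis I 1)) has_vector_derivative
           (\<chi> i J. pd (pd chi J) I X $ i)) (at 0)"
  using Ck2_partials(2)[OF assms(1) assms(2)]
  by (intro has_vector_derivative_matrix_componentwise) (simp add: defgrad_component has_vector_derivative_vec_nth)

text \<open>For \<open>D I\<close> the partial derivatives of a deformation gradient, the hypothesis is the symmetry of
  second derivatives and the sum is the divergence of the adjugate.\<close>
lemma adjugate3_polarization_trace:
  fixes D :: "3 \<Rightarrow> real^3^3"
  assumes "\<And>i I J. D I $ i $ J = D J $ i $ I"
  shows "(\<Sum>I\<in>UNIV. (adjugate3 (F + D I) - adjugate3 F - adjugate3 (D I)) $ I $ l) = 0"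
proof -
  have s: "D 2 $ i $ 1 = D 1 $ i $ 2" "D 3 $ i $ 1 = D 1 $ i $ 3" "D 3 $ i $ 2 = D 2 $ i $ 3" for i
    using assms by auto
  show ?thesis using exhaust_3[of l]
    by (elim disjE; simp add: sum_3 adjugate3_def s algebra_simps)
qed

lemma divergence_adjugate_defgrad:
  assumes S: "open S" "X \<in> S" and chi: "Ck 2 S chi"
  shows "partially_differentiable (\<lambda>Y. adjugate3 (defgrad chi Y)) X"
    and "divergence (\<lambda>Y. adjugate3 (defgrad chi Y)) X = 0"
proof -
  define F where "F = defgrad chi X"
  define D where "D I = (\<chi> i J. pd (pd chi J) I X $ i)" for I
  have d: "((\<lambda>s. adjugate3 (defgrad chi (X + s *\<^sub>R axis I 1))) has_vector_derivative
            adjugate3 (F + D I) - adjugate3 F - adjugate3 (D I)) (at 0)" for I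
    using has_vector_derivative_adjugate3[OF has_vector_derivative_defgrad[OF chi S(2)]]
    by (simp add: F_def D_def)
  then show "partially_differentiable (\<lambda>Y. adjugate3 (defgrad chi Y)) X"
    unfolding partially_differentiable_def using differentiableI_vector by blast
  have "D I $ i $ J = D J $ i $ I" for i I J
    using pd_pd_commute[OF S chi] by (simp add: D_def)
  from adjugate3_polarization_trace[OF this]
  show "divergence (\<lambda>Y. adjugate3 (defgrad chi Y)) X = 0"
    by (simp add: divergence_def pd_eqI[OF d] vec_eq_iff sum_component)
qed

lemma double_dot_adjugate3:
  "double_dot (adjugate3 F) (\<chi> I. \<Sum>m\<in>UNIV. F $ m $ I *\<^sub>R d m) = det F * (\<Sum>m\<in>UNIV. d m $ m)"
proof -
  have "double_dot (adjugate3 F) (\<chi> I. \<Sum>m\<in>UNIV. F $ m $ I *\<^sub>R d m)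
      = (\<Sum>m\<in>UNIV. \<Sum>J\<in>UNIV. (F ** adjugate3 F) $ m $ J * d m $ J)"
    by (simp add: double_dot_def matrix_matrix_mult_def sum_3 algebra_simps)
  also have "\<dots> = det F * (\<Sum>m\<in>UNIV. d m $ m)"
    by (simp add: matrix_mul_adjugate3 mat_def sum_3 algebra_simps)
  finally show ?thesis .
qed

lemma vector_divergence_piola:
  fixes v :: "real^3 \<Rightarrow> real^3"
  assumes S: "open S" "X \<in> S" and chi: "Ck 2 S chi" and v: "v differentiable (at (chi X))"
  shows "vector_divergence (\<lambda>Y. adjugate3 (defgrad chi Y) *v v (chi Y)) X
           = det (defgrad chi X) * vector_divergence v (chi X)"
proof -
  obtain v' where v': "(v has_derivative v') (at (chi X))" using v unfolding differentiable_def by blast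
  have dv: "((\<lambda>s. v (chi (X + s *\<^sub>R axis I 1))) has_vector_derivative
             (\<Sum>m\<in>UNIV. defgrad chi X $ m $ I *\<^sub>R pd v m (chi X))) (at 0)" for I
    using has_vector_derivative_compose_along_line[of v v' chi X] v'
      Ck2_partials(1)[OF chi S(2)] differentiableI_vector by blast
  then have "partially_differentiable (\<lambda>Y. v (chi Y)) X"
    unfolding partially_differentiable_def using differentiableI_vector by blast
  then have "vector_divergence (\<lambda>Y. adjugate3 (defgrad chi Y) *v v (chi Y)) X
      = double_dot (adjugate3 (defgrad chi X)) (grad (\<lambda>Y. v (chi Y)) X)"
    using vector_divergence_matrix_vector_mult divergence_adjugate_defgrad[OF S chi] by simp
  also have "grad (\<lambda>Y. v (chi Y)) X = (\<chi> I. \<Sum>m\<in>UNIV. defgrad chi X $ m $ I *\<^sub>R pd v m (chi X))"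
    unfolding grad_def using pd_eqI[OF dv] by simp
  finally show ?thesis by (simp add: double_dot_adjugate3 vector_divergence_def)
qed

section \<open>The pentamode transformation\<close>

definition pentamode_transform ::
    "(real^3 \<Rightarrow> real^3) \<Rightarrow> (real^3 \<Rightarrow> real^3^3) \<Rightarrow> (real^3 \<Rightarrow> real^3^3) \<Rightarrow> real^3 \<Rightarrow> real^3^3" where
  "pentamode_transform chi Q0 Q X =
     det (defgrad chi X) *\<^sub>R (matrix_inv (Q0 X) ** matrix_inv (defgrad chi X) ** Q (chi X))"

lemma matrix_mul_pentamode_transform:
  assumes "det (Q0 X) \<noteq> 0" "det (defgrad chi X) \<noteq> 0"
  shows "Q0 X ** pentamode_transform chi Q0 Q X = adjugate3 (defgrad chi X) ** Q (chi X)"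
proof -
  have Q0_inv: "Q0 X ** matrix_inv (Q0 X) = mat 1"
    and F_inv: "det (defgrad chi X) *\<^sub>R matrix_inv (defgrad chi X) = adjugate3 (defgrad chi X)"
    using assms by (simp_all add: matrix_inv_adjugate3 scaleR_matrix_matrix_mult_right matrix_mul_adjugate3)
  have "Q0 X ** pentamode_transform chi Q0 Q X
      = (Q0 X ** matrix_inv (Q0 X)) ** (det (defgrad chi X) *\<^sub>R matrix_inv (defgrad chi X)) ** Q (chi X)"
    by (simp add: pentamode_transform_def matrix_mul_assoc
        scaleR_matrix_matrix_mult_left scaleR_matrix_matrix_mult_right)
  then show ?thesis by (simp only: Q0_inv F_inv matrix_mul_lid)
qed

lemma differentiable_pentamode_transform_along_line:
  assumes S: "X \<in> S" and chi: "Ck 2 S chi"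
    and dets: "det (Q0 X) \<noteq> 0" "det (defgrad chi X) \<noteq> 0"
    and Q0: "Q0 differentiable (at X)" and Q: "Q differentiable (at (chi X))"
  shows "(\<lambda>s. pentamode_transform chi Q0 Q (X + s *\<^sub>R axis I 1)) differentiable (at 0)"
proof -
  have "(\<lambda>s. defgrad chi (X + s *\<^sub>R axis I 1)) differentiable (at 0)"
    using has_vector_derivative_defgrad[OF chi S] differentiableI_vector by blast
  moreover have "(\<lambda>s. chi (X + s *\<^sub>R axis I 1)) differentiable (at 0)"
    using Ck2_partials(1)[OF chi S] differentiableI_vector by blast
  moreover have "(\<lambda>s. X + s *\<^sub>R axis I 1) differentiable (at 0)"
    by (intro derivative_intros)
  then have "(\<lambda>s. Q0 (X + s *\<^sub>R axis I 1)) differentiable (at 0)"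
    using differentiable_compose[of Q0 "\<lambda>s. X + s *\<^sub>R axis I 1"] Q0 by simp
  ultimately show ?thesis
    using differentiable_compose[of Q "\<lambda>s. chi (X + s *\<^sub>R axis I 1)"] Q dets
    unfolding pentamode_transform_def
    by (intro derivative_intros differentiable_det3 differentiable_matrix_inv3) simp_all
qed

lemma double_dot_grad_pentamode_transform:
  fixes chi :: "real^3 \<Rightarrow> real^3" and Q0 Q :: "real^3 \<Rightarrow> real^3^3" and V w :: "real^3 \<Rightarrow> real^3"
  assumes S: "open S" "X \<in> S" and chi: "Ck 2 S chi"
    and dets: "\<forall>Y\<in>S. det (Q0 Y) \<noteq> 0" "\<forall>Y\<in>S. det (defgrad chi Y) \<noteq> 0"
    and Q0: "Q0 differentiable (at X)" "divergence Q0 X = 0"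
    and Q: "Q differentiable (at (chi X))" "divergence Q (chi X) = 0"
    and w: "w differentiable (at (chi X))"
    and V: "\<forall>Y\<in>S. V Y = pentamode_transform chi Q0 Q Y *v w (chi Y)"
  shows "double_dot (Q0 X) (grad V X) = det (defgrad chi X) * double_dot (Q (chi X)) (grad w (chi X))"
proof -
  have "partially_differentiable V X"
    unfolding partially_differentiable_def
  proof
    fix I
    have "(\<lambda>s. chi (X + s *\<^sub>R axis I 1)) differentiable (at 0)"
      using Ck2_partials(1)[OF chi S(2)] differentiableI_vector by blast
    then have "(\<lambda>s. w (chi (X + s *\<^sub>R axis I 1))) differentiable (at 0)"
      using differentiable_compose[of w "\<lambda>s. chi (X + s *\<^sub>R axis I 1)"] w by simp
    moreover have "(\<lambda>s. pentamode_transform chi Q0 Q (X + s *\<^sub>R axis I 1)) differentiable (at 0)"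
      using dets S(2) by (intro differentiable_pentamode_transform_along_line[OF S(2) chi _ _ Q0(1) Q(1)]) auto
    ultimately have "(\<lambda>s. pentamode_transform chi Q0 Q (X + s *\<^sub>R axis I 1) *v w (chi (X + s *\<^sub>R axis I 1)))
        differentiable (at 0)"
      by (intro differentiable_matrix_vector_mult)
    then obtain D where "((\<lambda>s. pentamode_transform chi Q0 Q (X + s *\<^sub>R axis I 1)
        *v w (chi (X + s *\<^sub>R axis I 1))) has_vector_derivative D) (at 0)"
      using vector_derivative_works by blast
    with has_vector_derivative_along_line_cong_open[OF S, of V] V
    have "((\<lambda>s. V (X + s *\<^sub>R axis I 1)) has_vector_derivative D) (at 0)"
      by simp
    then show "(\<lambda>s. V (X + s *\<^sub>R axis I 1)) differentiable (at 0)"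
      by (rule differentiableI_vector)
  qed
  then have "double_dot (Q0 X) (grad V X) = vector_divergence (\<lambda>Y. Q0 Y *v V Y) X"
    using double_dot_grad_eq_vector_divergence differentiable_imp_partially_differentiable Q0 by blast
  also have "\<dots> = vector_divergence (\<lambda>Y. adjugate3 (defgrad chi Y) *v (Q (chi Y) *v w (chi Y))) X"
  proof -
    have "Q0 Y *v V Y = adjugate3 (defgrad chi Y) *v (Q (chi Y) *v w (chi Y))" if "Y \<in> S" for Y
      using V matrix_mul_pentamode_transform[of Q0 Y chi Q] dets that
      by (simp add: matrix_vector_mul_assoc)
    then have "pd (\<lambda>Y. Q0 Y *v V Y) I X
        = pd (\<lambda>Y. adjugate3 (defgrad chi Y) *v (Q (chi Y) *v w (chi Y))) I X" for I
      by (rule pd_cong_open[OF S])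
    then show ?thesis unfolding vector_divergence_def by simp
  qed
  also have "\<dots> = det (defgrad chi X) * vector_divergence (\<lambda>x. Q x *v w x) (chi X)"
    using Q(1) w by (intro vector_divergence_piola[OF S chi] derivative_intros)
  also have "vector_divergence (\<lambda>x. Q x *v w x) (chi X) = double_dot (Q (chi X)) (grad w (chi X))"
    using double_dot_grad_eq_vector_divergence differentiable_imp_partially_differentiable Q w by metis
  finally show ?thesis .
qed

lemma strain_energy_double_dot: "strain_energy k Q D = k * (double_dot Q D)\<^sup>2"
  by (simp add: strain_energy_def double_dot_def)

lemma kin_energy_congruence:
  fixes G R :: "real^3^3"
  shows "kin_energy (transpose G ** R ** G) v = kin_energy R (G *v v)"
proof -
  have "v \<bullet> (y v* G) = (G *v v) \<bullet> y" for y
    by (metis dot_lmul_matrix inner_commute)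
  then show ?thesis by (simp add: kin_energy_def matrix_vector_mul_assoc[symmetric])
qed

lemma kin_energy_scaleR: "kin_energy (c *\<^sub>R R) v = c * kin_energy R v"
  by (simp add: kin_energy_def flip: scaleR_matrix_vector_assoc)

lemma kin_energy_scaleR_velocity: "kin_energy R (c *\<^sub>R v) = c\<^sup>2 * kin_energy R v"
  by (simp add: kin_energy_def matrix_vector_mult_scaleR power2_eq_square)

text \<open>No hypothesis \<open>c \<noteq> 0\<close> is needed: for \<open>c = 0\<close> both sides vanish, using \<open>x / 0 = 0\<close>.\<close>
lemma kin_energy_pentamode_transform:
  fixes Q0 Q F R :: "real^3^3"
  assumes "transpose Q0 = Q0" "transpose Q = Q" "det Q0 \<noteq> 0"
  shows "kin_energy (c *\<^sub>R (Q ** transpose (matrix_inv F) ** matrix_inv Q0 ** R ** matrix_inv Q0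
                       ** matrix_inv F ** Q)) v
       = kin_energy R ((c *\<^sub>R (matrix_inv Q0 ** matrix_inv F ** Q)) *v v) / c"
proof -
  define G where "G = matrix_inv Q0 ** matrix_inv F ** Q"
  have "transpose G = Q ** transpose (matrix_inv F) ** matrix_inv Q0"
    using assms by (simp add: G_def matrix_transpose_mul transpose_matrix_inv3 matrix_mul_assoc)
  then have "Q ** transpose (matrix_inv F) ** matrix_inv Q0 ** R ** matrix_inv Q0 ** matrix_inv F ** Q
      = transpose G ** R ** G"
    by (simp add: G_def matrix_mul_assoc)
  then show ?thesis
    by (simp add: kin_energy_scaleR kin_energy_congruence kin_energy_scaleR_velocity power2_eq_square
        flip: G_def scaleR_matrix_vector_assoc)
qed

theorem theorem1:
  fixes \<Omega> \<omega> :: "(real^3) set"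
    and chi :: "real^3 \<Rightarrow> real^3"
    and \<kappa>\<^sub>0 :: real
    and \<rho>\<^sub>0 Q\<^sub>0 Q :: "real^3 \<Rightarrow> real^3^3"
    and U u :: "real^3 \<Rightarrow> real \<Rightarrow> real^3"
  defines "\<Lambda> \<equiv> (\<lambda>X. det (defgrad chi X))"
    and "Gt \<equiv> (\<lambda>X. det (defgrad chi X) *\<^sub>R (matrix_inv (Q\<^sub>0 X) ** matrix_inv (defgrad chi X) ** Q (chi X)))"
    and "\<rho> \<equiv> (\<lambda>X. det (defgrad chi X) *\<^sub>R (Q (chi X) ** transpose (matrix_inv (defgrad chi X)) ** matrix_inv (Q\<^sub>0 X)
                 ** \<rho>\<^sub>0 X ** matrix_inv (Q\<^sub>0 X) ** matrix_inv (defgrad chi X) ** Q (chi X)))"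
    and "\<kappa> \<equiv> (\<lambda>X. det (defgrad chi X) * \<kappa>\<^sub>0)"
  assumes dom: "open \<Omega>" "connected \<Omega>"
    and chi_smooth: "smooth_on \<Omega> chi"
    and chi_inj: "inj_on chi \<Omega>"
    and chi_onto: "chi ` \<Omega> = \<omega>"
    and Jpos: "\<forall>X\<in>\<Omega>. \<Lambda> X > 0"
    and kappa0: "\<kappa>\<^sub>0 > 0"
    and rho0: "\<forall>X\<in>\<Omega>. sym_pos_def (\<rho>\<^sub>0 X)"
    and Q0_diff: "Q\<^sub>0 differentiable_on \<Omega>"
    and Q0_sym: "\<forall>X\<in>\<Omega>. transpose (Q\<^sub>0 X) = Q\<^sub>0 X \<and> invertible (Q\<^sub>0 X)"
    and Q0_div: "\<forall>X\<in>\<Omega>. divergence Q\<^sub>0 X = 0"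
    and Q_diff: "Q differentiable_on \<omega>"
    and Q_sym: "\<forall>x\<in>\<omega>. transpose (Q x) = Q x \<and> invertible (Q x)"
    and Q_div: "\<forall>x\<in>\<omega>. divergence Q x = 0"
    and u_diff_x: "\<forall>t. (\<lambda>x. u x t) differentiable_on \<omega>"
    and u_diff_t: "\<forall>x\<in>\<omega>. \<forall>t. (\<lambda>s. u x s) differentiable (at t)"
    and rel: "\<forall>X\<in>\<Omega>. \<forall>t. U X t = Gt X *v u (chi X) t"
    and X_in: "X \<in> \<Omega>"
  shows "kin_energy (\<rho> X) (vector_derivative (\<lambda>s. u (chi X) s) (at t))
           = kin_energy (\<rho>\<^sub>0 X) (vector_derivative (\<lambda>s. U X s) (at t)) / \<Lambda> X
       \<and> strain_energy (\<kappa> X) (Q (chi X)) (grad (\<lambda>x. u x t) (chi X))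
           = strain_energy \<kappa>\<^sub>0 (Q\<^sub>0 X) (grad (\<lambda>Y. U Y t) X) / \<Lambda> X"
proof -
  have Ck2: "Ck 2 \<Omega> chi" using chi_smooth unfolding smooth_on_def by blast
  then have "open \<omega>"
    using invariance_of_domain[OF _ dom(1) chi_inj] chi_onto by (simp add: numeral_2_eq_2)
  have x: "chi X \<in> \<omega>" unfolding chi_onto[symmetric] using X_in by (rule imageI)
  have Q0_X: "Q\<^sub>0 differentiable (at X)"
    using Q0_diff X_in dom(1) by (simp add: differentiable_on_eq_differentiable_at)
  have Q_x: "Q differentiable (at (chi X))" and u_x: "(\<lambda>x. u x t) differentiable (at (chi X))"
    using Q_diff u_diff_x x \<open>open \<omega>\<close> by (simp_all add: differentiable_on_eq_differentiable_at)
  have dets: "\<forall>Y\<in>\<Omega>. det (Q\<^sub>0 Y) \<noteq> 0" "\<forall>Y\<in>\<Omega>. det (defgrad chi Y) \<noteq> 0"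
    using Jpos Q0_sym by (auto simp: \<Lambda>_def invertible_det_nz)
  have Gt: "Gt = pentamode_transform chi Q\<^sub>0 Q"
    unfolding Gt_def pentamode_transform_def ..
  have "double_dot (Q\<^sub>0 X) (grad (\<lambda>Y. U Y t) X) = \<Lambda> X * double_dot (Q (chi X)) (grad (\<lambda>x. u x t) (chi X))"
    unfolding \<Lambda>_def using Q0_div Q_div X_in x rel
    by (intro double_dot_grad_pentamode_transform[OF dom(1) X_in Ck2 dets Q0_X _ Q_x _ u_x])
       (simp_all add: Gt)
  then have strain: "strain_energy (\<kappa> X) (Q (chi X)) (grad (\<lambda>x. u x t) (chi X))
      = strain_energy \<kappa>\<^sub>0 (Q\<^sub>0 X) (grad (\<lambda>Y. U Y t) X) / \<Lambda> X"
    using Jpos X_in by (simp add: strain_energy_double_dot \<kappa>_def \<Lambda>_def power2_eq_square)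
  have "vector_derivative (\<lambda>s. U X s) (at t) = Gt X *v vector_derivative (\<lambda>s. u (chi X) s) (at t)"
    using rel X_in u_diff_t x by (simp add: vector_derivative_matrix_vector_mult_left)
  then have kin: "kin_energy (\<rho> X) (vector_derivative (\<lambda>s. u (chi X) s) (at t))
      = kin_energy (\<rho>\<^sub>0 X) (vector_derivative (\<lambda>s. U X s) (at t)) / \<Lambda> X"
    using Q0_sym Q_sym X_in x dets by (simp add: \<rho>_def Gt_def \<Lambda>_def kin_energy_pentamode_transform)
  show ?thesis using kin strain ..
qed

end
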